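(* Let $(|B(\lambda)\rangle,\mathcal{M})$ be an $N$-regular quantum scenario. For any $z_0,z_1\in\{0,1\}$, the linear system $\Psi_0(z_0)\cup\Psi_1(z_1)$ over $\mathbb{Z}_2$ is inconsistent if and only if $\bigoplus_{j=0}^{N-1}r(j,0,z_0)\neq\bigoplus_{j=0}^{N-1}r(j,1,z_1)$.
   Context: $\equiv$ is equality modulo $2\pi$; $\oplus$ is addition mod 2. For $\varphi\in\mathbb{R}$, $E_\varphi=\cos\varphi X+\sin\varphi Y$, with $+1$ eigenvector $|\varphi\rangle=\frac{1}{\sqrt2}(|0\rangle+e^{i\varphi}|1\rangle)$ and $-1$ eigenvector $|\varphi+\pi\rangle$; outcomes $+1,-1$ relabelled $0,1$; measurements identified with angles. A measurement scenario $\mathcal{M}=(M_1,M_2,M_3)$ consists of finite sets $M_i\subseteq[0,\pi)$ of angles for qubit $i$. For a three-qubit state $|\psi\rangle$, the event $(A,B,C)\to(a,b,c)$ is impossible if $(\langle A+a\pi|\otimes\langle B+b\pi|\otimes\langle C+c\pi|)|\psi\rangle=0$. For $\lambda\in[0,\frac{\pi}{2})$, $|v_\lambda\rangle=\cos\frac{\lambda}{2}|0\rangle+\sin\frac{\lambda}{2}|1\rangle$, $|w_\lambda\rangle=\sin\frac{\lambda}{2}|0\rangle+\cos\frac{\lambda}{2}|1\rangle$, $|B(\lambda)\rangle=\frac{1}{\sqrt2}(|00\rangle|v_\lambda\rangle+|11\rangle|w_\lambda\rangle)$. Define modulo $2\pi$: $\beta(\lambda,\varphi)=\varphi-2\arctan\left(\frac{\cos\frac{\lambda}{2}\sin\varphi}{\sin\frac{\lambda}{2}+\cos\frac{\lambda}{2}\cos\varphi}\right)$.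 For $|B(\lambda)\rangle$, the event $(A,B,C)\to(a,b,c)$ is impossible iff $A+B\equiv\beta(\lambda,C+c\pi)+(1\oplus a\oplus b)\pi$. $(|B(\lambda)\rangle,\mathcal{M})$ is maximally impossible if for every $C\in M_3$ and $z\in\{0,1\}$: every $A\in M_1$ admits $B\in M_2$, $a,b$ with $(A,B,C)\to(a,b,z)$ impossible, and every $B\in M_2$ admits $A\in M_1$, $a,b$ with $(A,B,C)\to(a,b,z)$ impossible. In that case $|M_1|=|M_2|=:N$; write $M_1=\{A_0,\dots,A_{N-1}\}$, $M_2=\{B_0,\dots,B_{N-1}\}$, $M_3=\{C_0,\dots,C_{n-1}\}$; for each $(j,l,z)$ there is a unique $k=:K(j,l,z)$ such that $A_j+B_k-\beta(\lambda,C_l+z\pi)$ is an integer multiple of $\pi$, and $r(j,l,z)\in\{0,1\}$ is defined by $A_j+B_{K(j,l,z)}-\beta(\lambda,C_l+z\pi)\equiv r(j,l,z)\pi$. $\Psi_l(z)$ denotes the system of $\mathbb{Z}_2$-linear equations $\{a_j\oplus b_{K(j,l,z)}=r(j,l,z):j=0,\dots,N-1\}$ in unknowns $a_0,\dots,a_{N-1},b_0,\dots,b_{N-1}$. With $n=2$, the scenario has maximal rank if for all $z_0,z_1$ the coefficient matrix of $\Psi_0(z_0)\cup\Psi_1(z_1)$ has rank $2N-1$ over $\mathbb{Z}_2$. The scenario is $N$-regular if it is maximally impossible and of maximal rank, with $|M_1|=|M_2|=N$ and $M_3=\{C_0,C_1\}$. *)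

theory Defs
  imports "HOL-Analysis.Analysis" "HOL-Library.Z2" "Jordan_Normal_Form.DL_Rank"
begin

definition cong2pi :: "real \<Rightarrow> real \<Rightarrow> bool" where
  "cong2pi x y \<longleftrightarrow> (\<exists>k::int. x - y = 2 * pi * of_int k)"

text \<open>Components of the +1 eigenvector |phi> = (|0> + e^{i phi}|1>)/sqrt 2 of E_phi;
  the basis index False stands for |0>, True for |1>.\<close>
definition ket :: "real \<Rightarrow> bool \<Rightarrow> complex" where
  "ket phi x = (if x then cis phi else 1) / complex_of_real (sqrt 2)"

definition vvec :: "real \<Rightarrow> bool \<Rightarrow> real" where
  "vvec lam z = (if z then sin (lam / 2) else cos (lam / 2))"

definition wvec :: "real \<Rightarrow> bool \<Rightarrow> real" where
  "wvec lam z = (if z then cos (lam / 2) else sin (lam / 2))"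

text \<open>Amplitudes of |B(lambda)> = (|00>|v_lambda> + |11>|w_lambda>)/sqrt 2.\<close>
definition Bstate :: "real \<Rightarrow> bool \<Rightarrow> bool \<Rightarrow> bool \<Rightarrow> complex" where
  "Bstate lam x y z =
     (if x = y then complex_of_real (if x then wvec lam z else vvec lam z) else 0)
       / complex_of_real (sqrt 2)"

definition impossible_B :: "real \<Rightarrow> real \<Rightarrow> real \<Rightarrow> real \<Rightarrow> nat \<Rightarrow> nat \<Rightarrow> nat \<Rightarrow> bool" where
  "impossible_B lam A B C a b c \<longleftrightarrow>
     (\<Sum>x\<in>UNIV. \<Sum>y\<in>UNIV. \<Sum>z\<in>UNIV.
        cnj (ket (A + real a * pi) x) * cnj (ket (B + real b * pi) y)
        * cnj (ket (C + real c * pi) z) * Bstate lam x y z) = 0"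

text \<open>beta(lambda, phi), taken modulo 2 pi. When the denominator vanishes (then the numerator
  does not, since 0 <= lambda < pi/2) the arctan term is +-pi/2, so 2 arctan(...) is pi mod 2 pi.\<close>
definition beta :: "real \<Rightarrow> real \<Rightarrow> real" where
  "beta lam phi =
     (let num = cos (lam / 2) * sin phi; den = sin (lam / 2) + cos (lam / 2) * cos phi
      in phi - (if den = 0 then pi else 2 * arctan (num / den)))"

definition measurement_scenario :: "real set \<Rightarrow> real set \<Rightarrow> real set \<Rightarrow> bool" where
  "measurement_scenario M1 M2 M3 \<longleftrightarrow>
     finite M1 \<and> finite M2 \<and> finite M3 \<and>
     M1 \<subseteq> {0..<pi} \<and> M2 \<subseteq> {0..<pi} \<and> M3 \<subseteq> {0..<pi}"

definition maximally_impossible :: "real \<Rightarrow> real set \<Rightarrow> real set \<Rightarrow> real set \<Rightarrow> bool" where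
  "maximally_impossible lam M1 M2 M3 \<longleftrightarrow>
     (\<forall>C\<in>M3. \<forall>z\<in>{0,1}.
        (\<forall>A\<in>M1. \<exists>B\<in>M2. \<exists>a\<in>{0,1}. \<exists>b\<in>{0,1}. impossible_B lam A B C a b z) \<and>
        (\<forall>B\<in>M2. \<exists>A\<in>M1. \<exists>a\<in>{0,1}. \<exists>b\<in>{0,1}. impossible_B lam A B C a b z))"

text \<open>With enumerations M1 = {A 0, ..., A (N-1)}, M2 = {B 0, ..., B (N-1)},
  M3 = {C 0, C 1}: the index K(j,l,z) and the bit r(j,l,z).\<close>
definition Kidx :: "real \<Rightarrow> nat \<Rightarrow> (nat \<Rightarrow> real) \<Rightarrow> (nat \<Rightarrow> real) \<Rightarrow> (nat \<Rightarrow> real)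
                      \<Rightarrow> nat \<Rightarrow> nat \<Rightarrow> nat \<Rightarrow> nat" where
  "Kidx lam N A B C j l z =
     (THE k. k < N \<and> (\<exists>m::int. A j + B k - beta lam (C l + real z * pi) = of_int m * pi))"

definition rbit :: "real \<Rightarrow> nat \<Rightarrow> (nat \<Rightarrow> real) \<Rightarrow> (nat \<Rightarrow> real) \<Rightarrow> (nat \<Rightarrow> real)
                      \<Rightarrow> nat \<Rightarrow> nat \<Rightarrow> nat \<Rightarrow> bit" where
  "rbit lam N A B C j l z =
     (if cong2pi (A j + B (Kidx lam N A B C j l z) - beta lam (C l + real z * pi)) 0
      then 0 else 1)"

text \<open>Unknowns a_0..a_{N-1}, b_0..b_{N-1} are encoded as x :: nat => bit with
  x j = a_j and x (N + k) = b_k (indices < 2N). An equation is a pair (coefficient row, rhs).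
  The j-th equation of Psi_l(z) is a_j + b_{K(j,l,z)} = r(j,l,z).\<close>
definition psi_row :: "real \<Rightarrow> nat \<Rightarrow> (nat \<Rightarrow> real) \<Rightarrow> (nat \<Rightarrow> real) \<Rightarrow> (nat \<Rightarrow> real)
                      \<Rightarrow> nat \<Rightarrow> nat \<Rightarrow> nat \<Rightarrow> (nat \<Rightarrow> bit)" where
  "psi_row lam N A B C l z j =
     (\<lambda>i. if i = j \<or> i = N + Kidx lam N A B C j l z then 1 else 0)"

definition Psi :: "real \<Rightarrow> nat \<Rightarrow> (nat \<Rightarrow> real) \<Rightarrow> (nat \<Rightarrow> real) \<Rightarrow> (nat \<Rightarrow> real)
                      \<Rightarrow> nat \<Rightarrow> nat \<Rightarrow> ((nat \<Rightarrow> bit) \<times> bit) set" where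
  "Psi lam N A B C l z =
     {(psi_row lam N A B C l z j, rbit lam N A B C j l z) | j. j < N}"

definition satisfies_eq :: "nat \<Rightarrow> (nat \<Rightarrow> bit) \<Rightarrow> (nat \<Rightarrow> bit) \<times> bit \<Rightarrow> bool" where
  "satisfies_eq nv x e \<longleftrightarrow> (\<Sum>i<nv. fst e i * x i) = snd e"

definition inconsistent :: "nat \<Rightarrow> ((nat \<Rightarrow> bit) \<times> bit) set \<Rightarrow> bool" where
  "inconsistent nv S \<longleftrightarrow> \<not> (\<exists>x. \<forall>e\<in>S. satisfies_eq nv x e)"

definition coef_mat :: "real \<Rightarrow> nat \<Rightarrow> (nat \<Rightarrow> real) \<Rightarrow> (nat \<Rightarrow> real) \<Rightarrow> (nat \<Rightarrow> real)
                      \<Rightarrow> nat \<Rightarrow> nat \<Rightarrow> bit mat" where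
  "coef_mat lam N A B C z0 z1 =
     mat (2 * N) (2 * N)
       (\<lambda>(i, c). if i < N then psi_row lam N A B C 0 z0 i c
                 else psi_row lam N A B C 1 z1 (i - N) c)"

definition maximal_rank :: "real \<Rightarrow> nat \<Rightarrow> (nat \<Rightarrow> real) \<Rightarrow> (nat \<Rightarrow> real) \<Rightarrow> (nat \<Rightarrow> real) \<Rightarrow> bool" where
  "maximal_rank lam N A B C \<longleftrightarrow>
     (\<forall>z0\<in>{0,1}. \<forall>z1\<in>{0,1}.
        vec_space.rank (2 * N) (coef_mat lam N A B C z0 z1) + 1 = 2 * N)"

definition N_regular :: "real \<Rightarrow> nat \<Rightarrow> (nat \<Rightarrow> real) \<Rightarrow> (nat \<Rightarrow> real) \<Rightarrow> (nat \<Rightarrow> real) \<Rightarrow> bool" where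
  "N_regular lam N A B C \<longleftrightarrow>
     0 \<le> lam \<and> lam < pi / 2 \<and>
     inj_on A {..<N} \<and> inj_on B {..<N} \<and> C 0 \<noteq> C 1 \<and>
     measurement_scenario (A ` {..<N}) (B ` {..<N}) {C 0, C 1} \<and>
     maximally_impossible lam (A ` {..<N}) (B ` {..<N}) {C 0, C 1} \<and>
     maximal_rank lam N A B C"

end

theory Submission
  imports Defs
begin

text \<open>
  Impossibility of (A,B,C) -> (a,b,c) forces A + B \<equiv> beta(lambda, C + c pi) modulo pi, and
  angles in [0, pi) are determined modulo pi; hence in an N-regular scenario K(-,l,z) is a
  permutation and every unknown occurs in exactly one equation of each Psi_l(z). Summing the
  equations of Psi_l(z) shows that any solution has coordinate sum (+)_j r(j,l,z), so a solution
  forces the two parities to agree. Conversely, the all-ones vector annihilates every column of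
  the coefficient matrix, whose rank is 2N - 1; so the column space is exactly the hyperplane
  orthogonal to the all-ones vector, and the right-hand side lies in it iff the parities agree.
\<close>

text \<open>sqrt 2 <phi|w_lambda> = cnj (vw_overlap lambda phi), and beta lambda phi is
  phi - 2 arg (vw_overlap lambda phi) modulo 2 pi.\<close>
definition vw_overlap :: "real \<Rightarrow> real \<Rightarrow> complex" where
  "vw_overlap lam \<phi> = complex_of_real (sin (lam / 2)) + complex_of_real (cos (lam / 2)) * cis \<phi>"

lemma cnj_ket: "cnj (ket \<psi> x) = (if x then cis (- \<psi>) else 1) / complex_of_real (sqrt 2)"
  by (simp add: ket_def cis_cnj)

lemma impossible_B_iff:
  fixes lam A B C :: real and a b c :: nat
  defines "\<phi> \<equiv> C + real c * pi" and "\<theta> \<equiv> A + real a * pi + (B + real b * pi)"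
  shows "impossible_B lam A B C a b c \<longleftrightarrow>
           cis (- \<phi>) * vw_overlap lam \<phi> + cis (- \<theta>) * cnj (vw_overlap lam \<phi>) = 0"
proof -
  define sh ch where "sh = complex_of_real (sin (lam / 2))" and "ch = complex_of_real (cos (lam / 2))"
  have "cis (- \<phi>) * vw_overlap lam \<phi> + cis (- \<theta>) * cnj (vw_overlap lam \<phi>)
      = ch + cis (- \<phi>) * sh + cis (- A - real a * pi) * cis (- B - real b * pi) * (sh + cis (- \<phi>) * ch)"
    by (simp add: vw_overlap_def sh_def ch_def cis_cnj cis_mult algebra_simps \<theta>_def)
  moreover have "(\<Sum>x\<in>UNIV. \<Sum>y\<in>UNIV. \<Sum>z\<in>UNIV.
        cnj (ket (A + real a * pi) x) * cnj (ket (B + real b * pi) y)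
        * cnj (ket (C + real c * pi) z) * Bstate lam x y z)
      = (ch + cis (- \<phi>) * sh + cis (- A - real a * pi) * cis (- B - real b * pi) * (sh + cis (- \<phi>) * ch))
          / complex_of_real (sqrt 2) ^ 4"
    by (simp add: UNIV_bool cnj_ket Bstate_def vvec_def wvec_def sh_def ch_def \<phi>_def
        times_divide_times_eq add_divide_distrib power4_eq_xxxx mult.assoc distrib_left)
  ultimately show ?thesis
    unfolding impossible_B_def by simp
qed

lemma sin_less_cos:
  fixes h :: real assumes "0 \<le> h" "h < pi / 4"
  shows "sin h < cos h"
proof -
  have "sin h < sin (pi / 4)" using assms by (intro sin_monotone_2pi) auto
  also have "\<dots> = cos (pi / 4)" by (simp add: sin_45 cos_45)
  also have "\<dots> < cos h" using assms by (intro cos_monotone_0_pi) auto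
  finally show ?thesis .
qed

lemma vw_overlap_polar:
  assumes "0 \<le> lam" "lam < pi / 2"
  obtains \<rho> \<alpha> where "\<rho> \<noteq> 0" "vw_overlap lam \<phi> = complex_of_real \<rho> * cis \<alpha>"
    "beta lam \<phi> = \<phi> - 2 * \<alpha>"
proof -
  define h where "h = lam / 2"
  define den where "den = sin h + cos h * cos \<phi>"
  define num where "num = cos h * sin \<phi>"
  have h: "0 \<le> h" "h < pi / 4" using assms by (auto simp: h_def)
  have cos_pos: "0 < cos h" using h by (intro cos_gt_zero_pi) auto
  have sin_nonneg: "0 \<le> sin h" using h by (intro sin_ge_zero) auto
  have Q: "vw_overlap lam \<phi> = Complex den num"
    by (simp add: vw_overlap_def complex_eq_iff den_def num_def h_def)
  show thesis
  proof (cases "den = 0")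
    case True
    have "num \<noteq> 0"
    proof
      assume "num = 0"
      then have "sin \<phi> = 0" using cos_pos by (simp add: num_def)
      then have "cos \<phi> = 1 \<or> cos \<phi> = -1"
        using sin_cos_squared_add[of \<phi>] by (simp add: power2_eq_1_iff)
      then show False
        using True sin_less_cos[OF h] cos_pos sin_nonneg by (auto simp: den_def)
    qed
    moreover have "vw_overlap lam \<phi> = complex_of_real num * cis (pi / 2)"
      using True by (simp add: Q complex_eq_iff)
    moreover have "beta lam \<phi> = \<phi> - 2 * (pi / 2)"
      using True by (simp add: beta_def Let_def den_def h_def)
    ultimately show thesis by (rule that)
  next
    case False
    define t where "t = num / den"
    have root_pos: "0 < sqrt (1 + t\<^sup>2)" by (simp add: add_pos_nonneg)
    show thesis
    proof (rule that)
      show "den * sqrt (1 + t\<^sup>2) \<noteq> 0" using False root_pos by simp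
      show "vw_overlap lam \<phi> = complex_of_real (den * sqrt (1 + t\<^sup>2)) * cis (arctan t)"
        using False root_pos by (simp add: Q complex_eq_iff cos_arctan sin_arctan t_def)
      show "beta lam \<phi> = \<phi> - 2 * arctan t"
        using False by (simp add: beta_def Let_def den_def num_def h_def t_def)
    qed
  qed
qed

lemma impossible_B_imp_beta_mod_pi:
  assumes "0 \<le> lam" "lam < pi / 2" and "impossible_B lam A B C a b c"
  shows "\<exists>m::int. A + B - beta lam (C + real c * pi) = of_int m * pi"
proof -
  define \<phi> where "\<phi> = C + real c * pi"
  define \<theta> where "\<theta> = A + real a * pi + (B + real b * pi)"
  obtain \<rho> \<alpha> where \<rho>: "\<rho> \<noteq> 0" and Q: "vw_overlap lam \<phi> = complex_of_real \<rho> * cis \<alpha>"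
    and beta: "beta lam \<phi> = \<phi> - 2 * \<alpha>"
    using vw_overlap_polar[OF assms(1,2)] .
  have rot: "cis (- \<phi>) * (complex_of_real \<rho> * cis \<alpha>) = complex_of_real \<rho> * cis (\<alpha> - \<phi>)"
    "cis (- \<theta>) * (complex_of_real \<rho> * cis (- \<alpha>)) = complex_of_real \<rho> * cis (- \<alpha> - \<theta>)"
    by (simp_all add: cis_mult mult.left_commute add.commute)
  have "complex_of_real \<rho> * (cis (\<alpha> - \<phi>) + cis (- \<alpha> - \<theta>)) = 0"
    using assms(3) unfolding impossible_B_iff Q \<phi>_def[symmetric] \<theta>_def[symmetric]
    by (simp add: cis_cnj rot distrib_left)
  then have "cis (\<alpha> + \<theta>) * (cis (\<alpha> - \<phi>) + cis (- \<alpha> - \<theta>)) = 0"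
    using \<rho> by simp
  then have "cis (\<theta> - beta lam \<phi>) = -1"
    by (simp add: beta distrib_left cis_mult algebra_simps eq_neg_iff_add_eq_0)
  from arg_cong[where f = Im, OF this] have "sin (\<theta> - beta lam \<phi>) = 0"
    by simp
  then obtain i :: int where "\<theta> - beta lam \<phi> = of_int i * pi"
    by (auto simp: sin_zero_iff_int2)
  then have "A + B - beta lam \<phi> = of_int (i - int a - int b) * pi"
    by (simp add: \<theta>_def algebra_simps)
  then show ?thesis unfolding \<phi>_def by blast
qed

lemma (in vec_space) submodule_orthogonal:
  assumes "y \<in> carrier_vec n"
  shows "submodule class_ring {v \<in> carrier_vec n. scalar_prod y v = 0} V"
proof (unfold_locales)
  show "{v \<in> carrier_vec n. scalar_prod y v = 0} \<subseteq> carrier V" by auto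
  show "\<zero>\<^bsub>V\<^esub> \<in> {v \<in> carrier_vec n. scalar_prod y v = 0}" using assms by auto
  show "v \<oplus>\<^bsub>V\<^esub> w \<in> {v \<in> carrier_vec n. scalar_prod y v = 0}"
    if "v \<in> {v \<in> carrier_vec n. scalar_prod y v = 0}" "w \<in> {v \<in> carrier_vec n. scalar_prod y v = 0}" for v w
    using that assms by (auto simp: scalar_prod_add_distrib)
  show "c \<odot>\<^bsub>V\<^esub> v \<in> {v \<in> carrier_vec n. scalar_prod y v = 0}"
    if "c \<in> carrier class_ring" "v \<in> {v \<in> carrier_vec n. scalar_prod y v = 0}" for c v
    using that assms by (auto simp: scalar_prod_smult_distrib)
qed

text \<open>The columns span a subspace of dimension n - 1 of the hyperplane orthogonal to y, hence
  all of it.\<close>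
lemma (in vec_space) solvable_if_corank_one:
  assumes M: "M \<in> carrier_mat n nc" and rank: "rank M + 1 = n"
    and y: "y \<in> carrier_vec n" "y \<noteq> 0\<^sub>v n" and y_cols: "\<And>i. i < nc \<Longrightarrow> scalar_prod y (col M i) = 0"
    and r: "r \<in> carrier_vec n" "scalar_prod y r = 0"
  shows "\<exists>x \<in> carrier_vec nc. M *\<^sub>v x = r"
proof -
  define H where "H = {v \<in> carrier_vec n. scalar_prod y v = 0}"
  obtain i where i: "i < n" "y $ i \<noteq> 0" using y by (auto simp: vec_eq_iff)
  define e :: "'a vec" where "e = unit_vec n i"
  have e: "e \<in> carrier_vec n" "e \<notin> H" using i y by (auto simp: H_def e_def)
  have cols_H: "set (cols M) \<subseteq> H"
    using M y_cols by (auto simp: H_def cols_def)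
  have "lin_indpt {}"
    by (metis empty_subsetI fin_dim finite_basis_exists subset_li_is_li vec_vs vectorspace.basis_def)
  then obtain S where S: "maximal S (\<lambda>T. T \<subseteq> set (cols M) \<and> lin_indpt T)"
    using maximal_exists_superset[of "set (cols M)" "\<lambda>T. T \<subseteq> set (cols M) \<and> lin_indpt T" "{}"]
    by auto
  have S_cols: "S \<subseteq> set (cols M)" "lin_indpt S" using S unfolding maximal_def by auto
  have S_carrier: "S \<subseteq> carrier_vec n" using S_cols(1) cols_H by (auto simp: H_def)
  have card_S: "card S + 1 = n" using rank_card_indpt[OF M S] rank by simp
  have "r \<in> span (set (cols M))"
  proof (rule ccontr)
    assume "r \<notin> span (set (cols M))"
    then have r_S: "r \<notin> span S" using span_is_monotone[OF S_cols(1)] by auto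
    then have "r \<notin> S" using in_own_span[OF S_carrier] by auto
    have li_r: "lin_indpt (insert r S)"
      using lin_dep_iff_in_span[OF S_carrier S_cols(2) _ \<open>r \<notin> S\<close>] r r_S by auto
    have "insert r S \<subseteq> H" using S_cols(1) cols_H r by (auto simp: H_def)
    then have "span (insert r S) \<subseteq> H"
      by (intro span_is_subset) (auto simp: H_def y submodule_orthogonal)
    then have "e \<notin> span (insert r S)" "e \<notin> insert r S" using e \<open>insert r S \<subseteq> H\<close> by auto
    then have "lin_indpt (insert e (insert r S))"
      using lin_dep_iff_in_span[OF _ li_r] S_carrier r e by auto
    then have "card (insert e (insert r S)) \<le> dim"
      using li_le_dim(2)[OF fin_dim] S_carrier r e by auto
    moreover have "card (insert e (insert r S)) = card S + 2"
      using fin_dim li_le_dim(1) S_carrier S_cols(2) \<open>r \<notin> S\<close> \<open>e \<notin> insert r S\<close> 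
      by (auto simp: card_insert_if)
    ultimately show False using card_S dim_is_n by simp
  qed
  then have "r \<in> col_space M" by (simp add: col_space_def)
  then show ?thesis using col_space_eq[OF M] M by auto
qed

lemma sum_lessThan_add:
  fixes f :: "nat \<Rightarrow> 'a::comm_monoid_add"
  shows "(\<Sum>i<m + n. f i) = (\<Sum>i<m. f i) + (\<Sum>i<n. f (m + i))"
  by (induction n) (simp_all add: add.assoc)

lemma scalar_prod_ones:
  fixes v :: "'a::semiring_1 vec"
  assumes "v \<in> carrier_vec n"
  shows "scalar_prod (vec n (\<lambda>_. 1)) v = (\<Sum>i<n. v $ i)"
  using assms unfolding scalar_prod_def by (intro sum.cong) auto

lemma sum_matching_indicator:
  fixes K :: "nat \<Rightarrow> nat"
  assumes K: "bij_betw K {..<N} {..<N}" and c: "c < 2 * N"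
  shows "(\<Sum>j<N. if c = j \<or> c = N + K j then 1 else 0) = (1 :: 'a::semiring_1)"
proof (cases "c < N")
  case True
  then have "(\<Sum>j<N. if c = j \<or> c = N + K j then 1 else 0 :: 'a) = (\<Sum>j<N. if c = j then 1 else 0)"
    by (intro sum.cong) auto
  then show ?thesis using True by simp
next
  case False
  then have "(\<Sum>j<N. if c = j \<or> c = N + K j then 1 else 0 :: 'a)
      = (\<Sum>j<N. (\<lambda>k. if k = c - N then 1 else 0 :: 'a) (K j))"
    by (intro sum.cong) auto
  also have "\<dots> = (\<Sum>k<N. if k = c - N then 1 else 0)"
    by (rule sum.reindex_bij_betw[OF K])
  finally show ?thesis using False c by simp
qed

lemma eq_if_diff_mult_pi:
  fixes x x' :: real and k :: int
  assumes "0 \<le> x" "x < pi" "0 \<le> x'" "x' < pi" and "x - x' = of_int k * pi"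
  shows "x = x'"
proof -
  have "of_int k * pi < 1 * pi" "-1 * pi < of_int k * pi" using assms by linarith+
  then have "of_int k < (1::real)" "-1 < (of_int k :: real)"
    by (simp_all only: mult_less_cancel_right_pos[OF pi_gt_zero])
  then have "k = 0" by linarith
  then show ?thesis using assms by simp
qed

lemma N_regular_angles_in_range:
  assumes "N_regular lam N A B C" "j < N"
  shows "0 \<le> A j" "A j < pi" "0 \<le> B j" "B j < pi"
  using assms by (auto simp: N_regular_def measurement_scenario_def image_subset_iff)

context
  fixes lam :: real and N l z :: nat and A B C :: "nat \<Rightarrow> real"
  assumes regular: "N_regular lam N A B C" and l: "l \<in> {0, 1}" and z: "z \<in> {0, 1}"
begin

private abbreviation "K j \<equiv> Kidx lam N A B C j l z"

private abbreviation "\<beta> \<equiv> beta lam (C l + real z * pi)"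

private lemmas angles_in_range = N_regular_angles_in_range[OF regular]

lemma Kidx_spec:
  assumes j: "j < N"
  shows "K j < N" and "\<exists>m::int. A j + B (K j) - \<beta> = of_int m * pi"
proof -
  have lam: "0 \<le> lam" "lam < pi / 2" using regular by (simp_all add: N_regular_def)
  have "C l \<in> {C 0, C 1}" using l by auto
  then obtain b' a b where "b' \<in> B ` {..<N}" and "impossible_B lam (A j) b' (C l) a b z"
    using regular z j unfolding N_regular_def maximally_impossible_def by blast
  then obtain k m where k: "k < N" "A j + B k - \<beta> = of_int m * pi"
    using impossible_B_imp_beta_mod_pi[OF lam] by blast
  have "k' = k" if k': "k' < N" "A j + B k' - \<beta> = of_int m' * pi" for k' m'
  proof -
    have "B k' - B k = of_int (m' - m) * pi" using k k' by (simp add: algebra_simps)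
    then have "B k' = B k"
      using angles_in_range(3,4)[OF k'(1)] angles_in_range(3,4)[OF k(1)] eq_if_diff_mult_pi by blast
    moreover have "inj_on B {..<N}" using regular by (simp add: N_regular_def)
    ultimately show ?thesis using k k' by (simp add: inj_on_eq_iff)
  qed
  then have "K j = k"
    unfolding Kidx_def using k by (intro the_equality) blast+
  then show "K j < N" "\<exists>m::int. A j + B (K j) - \<beta> = of_int m * pi"
    using k by auto
qed

lemma bij_betw_Kidx: "bij_betw K {..<N} {..<N}"
proof -
  have "inj_on K {..<N}"
  proof (rule inj_onI)
    fix j j' assume j: "j \<in> {..<N}" and j': "j' \<in> {..<N}" and eq: "K j = K j'"
    obtain m where m: "A j + B (K j) - \<beta> = of_int m * pi" using Kidx_spec(2) j by blast
    obtain m' where m': "A j' + B (K j') - \<beta> = of_int m' * pi" using Kidx_spec(2) j' by blast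
    have "A j - A j' = of_int (m - m') * pi" using m m' eq by (simp add: algebra_simps)
    then have "A j = A j'"
      using angles_in_range(1,2)[of j] angles_in_range(1,2)[of j'] j j' eq_if_diff_mult_pi by blast
    moreover have "inj_on A {..<N}" using regular by (simp add: N_regular_def)
    ultimately show "j = j'" using j j' by (simp add: inj_on_eq_iff)
  qed
  moreover have "K ` {..<N} \<subseteq> {..<N}" using Kidx_spec(1) by auto
  ultimately show ?thesis
    by (simp add: bij_betw_def endo_inj_surj)
qed

lemma sum_psi_row:
  assumes "c < 2 * N"
  shows "(\<Sum>j<N. psi_row lam N A B C l z j c) = 1"
  unfolding psi_row_def using sum_matching_indicator[OF bij_betw_Kidx assms] by simp

lemma sum_rbit_eq_sum_solution:
  assumes sol: "\<forall>e\<in>Psi lam N A B C l z. satisfies_eq (2 * N) x e"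
  shows "(\<Sum>j<N. rbit lam N A B C j l z) = (\<Sum>i<2 * N. x i)"
proof -
  have "(\<Sum>j<N. rbit lam N A B C j l z) = (\<Sum>j<N. \<Sum>i<2 * N. psi_row lam N A B C l z j i * x i)"
  proof (rule sum.cong)
    fix j assume "j \<in> {..<N}"
    then have "(psi_row lam N A B C l z j, rbit lam N A B C j l z) \<in> Psi lam N A B C l z"
      by (auto simp: Psi_def)
    then show "rbit lam N A B C j l z = (\<Sum>i<2 * N. psi_row lam N A B C l z j i * x i)"
      using sol by (auto simp: satisfies_eq_def)
  qed simp
  also have "\<dots> = (\<Sum>i<2 * N. (\<Sum>j<N. psi_row lam N A B C l z j i) * x i)"
    unfolding sum_distrib_right by (rule sum.swap)
  also have "\<dots> = (\<Sum>i<2 * N. x i)"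
    by (intro sum.cong) (simp_all add: sum_psi_row)
  finally show ?thesis .
qed

end

definition rhs_vec :: "real \<Rightarrow> nat \<Rightarrow> (nat \<Rightarrow> real) \<Rightarrow> (nat \<Rightarrow> real) \<Rightarrow> (nat \<Rightarrow> real)
                      \<Rightarrow> nat \<Rightarrow> nat \<Rightarrow> bit vec" where
  "rhs_vec lam N A B C z0 z1 =
     vec (2 * N) (\<lambda>i. if i < N then rbit lam N A B C i 0 z0 else rbit lam N A B C (i - N) 1 z1)"

lemma coef_mat_carrier: "coef_mat lam N A B C z0 z1 \<in> carrier_mat (2 * N) (2 * N)"
  by (simp add: coef_mat_def)

lemma coef_mat_index:
  assumes "i < 2 * N" "c < 2 * N"
  shows "coef_mat lam N A B C z0 z1 $$ (i, c) =
    (if i < N then psi_row lam N A B C 0 z0 i c else psi_row lam N A B C 1 z1 (i - N) c)"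
  using assms by (simp add: coef_mat_def)

lemma satisfies_Psi_if_coef_mat_solution:
  assumes x: "x \<in> carrier_vec (2 * N)"
    and sol: "coef_mat lam N A B C z0 z1 *\<^sub>v x = rhs_vec lam N A B C z0 z1"
  shows "\<forall>e \<in> Psi lam N A B C 0 z0 \<union> Psi lam N A B C 1 z1. satisfies_eq (2 * N) (($) x) e"
proof -
  have row: "(\<Sum>c<2 * N. coef_mat lam N A B C z0 z1 $$ (i, c) * x $ c) = rhs_vec lam N A B C z0 z1 $ i"
    if "i < 2 * N" for i
  proof -
    have "rhs_vec lam N A B C z0 z1 $ i = scalar_prod (row (coef_mat lam N A B C z0 z1) i) x"
      using that by (simp add: sol[symmetric] coef_mat_def)
    then show ?thesis
      using that x unfolding scalar_prod_def by (auto simp: coef_mat_def atLeast0LessThan intro!: sum.cong)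
  qed
  show ?thesis
  proof
    fix e assume "e \<in> Psi lam N A B C 0 z0 \<union> Psi lam N A B C 1 z1"
    then consider (first) j where "j < N" "e = (psi_row lam N A B C 0 z0 j, rbit lam N A B C j 0 z0)"
      | (second) j where "j < N" "e = (psi_row lam N A B C 1 z1 j, rbit lam N A B C j 1 z1)"
      by (auto simp: Psi_def)
    then show "satisfies_eq (2 * N) (($) x) e"
    proof cases
      case first
      with row[of j] show ?thesis
        by (simp add: satisfies_eq_def rhs_vec_def coef_mat_index)
    next
      case second
      with row[of "N + j"] show ?thesis
        by (simp add: satisfies_eq_def rhs_vec_def coef_mat_index)
    qed
  qed
qed

lemma scalar_prod_ones_col_coef_mat:
  assumes "N_regular lam N A B C" "z0 \<in> {0, 1}" "z1 \<in> {0, 1}" and c: "c < 2 * N"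
  shows "scalar_prod (vec (2 * N) (\<lambda>_. 1)) (col (coef_mat lam N A B C z0 z1) c) = 0"
proof -
  have "scalar_prod (vec (2 * N) (\<lambda>_. 1)) (col (coef_mat lam N A B C z0 z1) c)
      = (\<Sum>i<2 * N. col (coef_mat lam N A B C z0 z1) c $ i)"
    by (rule scalar_prod_ones) (rule col_carrier_vec[OF c coef_mat_carrier])
  also have "\<dots> = (\<Sum>j<N. psi_row lam N A B C 0 z0 j c) + (\<Sum>j<N. psi_row lam N A B C 1 z1 j c)"
    unfolding mult_2 sum_lessThan_add using c by (intro arg_cong2[where f = "(+)"] sum.cong)
      (simp_all add: coef_mat_def)
  also have "\<dots> = 0"
    using sum_psi_row[where l = 0, OF assms(1) _ assms(2) c]
      sum_psi_row[where l = 1, OF assms(1) _ assms(3) c] by simp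
  finally show ?thesis .
qed

lemma scalar_prod_ones_rhs_vec:
  "scalar_prod (vec (2 * N) (\<lambda>_. 1)) (rhs_vec lam N A B C z0 z1)
     = (\<Sum>j<N. rbit lam N A B C j 0 z0) + (\<Sum>j<N. rbit lam N A B C j 1 z1)"
proof -
  have "scalar_prod (vec (2 * N) (\<lambda>_. 1)) (rhs_vec lam N A B C z0 z1) = (\<Sum>i<2 * N. rhs_vec lam N A B C z0 z1 $ i)"
    by (rule scalar_prod_ones) (simp add: rhs_vec_def)
  also have "\<dots> = (\<Sum>j<N. rbit lam N A B C j 0 z0) + (\<Sum>j<N. rbit lam N A B C j 1 z1)"
    unfolding mult_2 sum_lessThan_add
    by (intro arg_cong2[where f = "(+)"] sum.cong) (simp_all add: rhs_vec_def)
  finally show ?thesis .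
qed

lemma sum_rbit_eq_if_solution:
  assumes "N_regular lam N A B C" "z0 \<in> {0, 1}" "z1 \<in> {0, 1}"
    and "\<forall>e \<in> Psi lam N A B C 0 z0 \<union> Psi lam N A B C 1 z1. satisfies_eq (2 * N) x e"
  shows "(\<Sum>j<N. rbit lam N A B C j 0 z0) = (\<Sum>j<N. rbit lam N A B C j 1 z1)"
  using assms(4) sum_rbit_eq_sum_solution[OF assms(1) _ assms(2), where l = 0 and x = x]
    sum_rbit_eq_sum_solution[OF assms(1) _ assms(3), where l = 1 and x = x] by simp

lemma solution_if_sum_rbit_eq:
  assumes "N_regular lam N A B C" "z0 \<in> {0, 1}" "z1 \<in> {0, 1}"
    and sums_eq: "(\<Sum>j<N. rbit lam N A B C j 0 z0) = (\<Sum>j<N. rbit lam N A B C j 1 z1)"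
  shows "\<exists>x. \<forall>e \<in> Psi lam N A B C 0 z0 \<union> Psi lam N A B C 1 z1. satisfies_eq (2 * N) x e"
proof -
  let ?ones = "vec (2 * N) (\<lambda>_. 1 :: bit)"
  have rank: "vec_space.rank (2 * N) (coef_mat lam N A B C z0 z1) + 1 = 2 * N"
    using assms(1-3) by (auto simp: N_regular_def maximal_rank_def)
  then have "0 < N" by (cases N) auto
  then have "?ones $ 0 \<noteq> 0\<^sub>v (2 * N) $ 0" by simp
  then have ones: "?ones \<in> carrier_vec (2 * N)" "?ones \<noteq> 0\<^sub>v (2 * N)" by auto
  have rhs: "rhs_vec lam N A B C z0 z1 \<in> carrier_vec (2 * N)"
    "scalar_prod ?ones (rhs_vec lam N A B C z0 z1) = 0"
    unfolding scalar_prod_ones_rhs_vec sums_eq by (simp_all add: rhs_vec_def)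
  obtain x where "x \<in> carrier_vec (2 * N)" "coef_mat lam N A B C z0 z1 *\<^sub>v x = rhs_vec lam N A B C z0 z1"
    using vec_space.solvable_if_corank_one[OF coef_mat_carrier rank ones
        scalar_prod_ones_col_coef_mat[OF assms(1-3)] rhs] by blast
  then show ?thesis using satisfies_Psi_if_coef_mat_solution by blast
qed

theorem lemma16:
  fixes lam :: real and N :: nat and A B C :: "nat \<Rightarrow> real" and z0 z1 :: nat
  assumes "N_regular lam N A B C"
    and "z0 \<in> {0, 1}" and "z1 \<in> {0, 1}"
  shows "inconsistent (2 * N) (Psi lam N A B C 0 z0 \<union> Psi lam N A B C 1 z1) \<longleftrightarrow>
         (\<Sum>j<N. rbit lam N A B C j 0 z0) \<noteq> (\<Sum>j<N. rbit lam N A B C j 1 z1)"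
  unfolding inconsistent_def
  using sum_rbit_eq_if_solution[OF assms] solution_if_sum_rbit_eq[OF assms] by blast

end
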